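(* Every oriented graph without transmitters has at least three weak kings.
   Context: An oriented graph is a digraph with no loops and no pair of symmetric arcs. A transmitter is a vertex of indegree $0$. For vertices $u,v$ write $u(1\text{-}0)v$ if there is an arc from $u$ to $v$, and $u(0\text{-}0)v$ if there is no arc between $u$ and $v$. A vertex $v$ is weakly reachable within two steps from $u$ if $u(1\text{-}0)v$, or $u(0\text{-}0)v$, or for some vertex $w$ one has $u(1\text{-}0)w(1\text{-}0)v$, or $u(1\text{-}0)w(0\text{-}0)v$, or $u(0\text{-}0)w(1\text{-}0)v$. A vertex $u$ of an oriented graph $D$ is a weak king if every other vertex of $D$ is weakly reachable within two steps from $u$. *)

theory Defs
  imports Main
begin

definition oriented_graph :: "'a set \<Rightarrow> ('a \<times> 'a) set \<Rightarrow> bool" where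
  "oriented_graph V A \<longleftrightarrow> finite V \<and> V \<noteq> {} \<and> A \<subseteq> V \<times> V
     \<and> (\<forall>v. (v, v) \<notin> A) \<and> (\<forall>u v. (u, v) \<in> A \<longrightarrow> (v, u) \<notin> A)"

definition indegree :: "'a set \<Rightarrow> ('a \<times> 'a) set \<Rightarrow> 'a \<Rightarrow> nat" where
  "indegree V A v = card {u \<in> V. (u, v) \<in> A}"

definition transmitter :: "'a set \<Rightarrow> ('a \<times> 'a) set \<Rightarrow> 'a \<Rightarrow> bool" where
  "transmitter V A v \<longleftrightarrow> v \<in> V \<and> indegree V A v = 0"

definition arc10 :: "('a \<times> 'a) set \<Rightarrow> 'a \<Rightarrow> 'a \<Rightarrow> bool" where
  "arc10 A u v \<longleftrightarrow> (u, v) \<in> A"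

definition arc00 :: "('a \<times> 'a) set \<Rightarrow> 'a \<Rightarrow> 'a \<Rightarrow> bool" where
  "arc00 A u v \<longleftrightarrow> (u, v) \<notin> A \<and> (v, u) \<notin> A"

definition weakly_reachable2 :: "'a set \<Rightarrow> ('a \<times> 'a) set \<Rightarrow> 'a \<Rightarrow> 'a \<Rightarrow> bool" where
  "weakly_reachable2 V A u v \<longleftrightarrow>
     arc10 A u v \<or> arc00 A u v \<or>
     (\<exists>w\<in>V. (arc10 A u w \<and> arc10 A w v) \<or> (arc10 A u w \<and> arc00 A w v)
            \<or> (arc00 A u w \<and> arc10 A w v))"

definition weak_king :: "'a set \<Rightarrow> ('a \<times> 'a) set \<Rightarrow> 'a \<Rightarrow> bool" where
  "weak_king V A u \<longleftrightarrow> u \<in> V \<and> (\<forall>v\<in>V. v \<noteq> u \<longrightarrow> weakly_reachable2 V A u v)"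

end

theory Submission
  imports Defs
begin

text \<open>If \<open>x\<close> does not weakly reach \<open>v\<close> within two steps, then \<open>v \<rightarrow> x\<close>, \<open>v\<close> dominates every
  out-neighbour of \<open>x\<close>, and every in-neighbour of \<open>v\<close> is an in-neighbour of \<open>x\<close>; so \<open>v\<close> has
  strictly smaller in-degree than \<open>x\<close>, even when in-degrees are counted inside the set of
  in-neighbours of an out-neighbour \<open>u\<close> of \<open>x\<close>. Hence a vertex of minimum in-degree among the
  in-neighbours of any \<open>u\<close> is a weak king with an arc to \<open>u\<close>, and no transmitters means this
  set is never empty. Iterating from a weak king \<open>x\<^sub>1\<close> gives weak kings
  \<open>x\<^sub>3 \<rightarrow> x\<^sub>2 \<rightarrow> x\<^sub>1\<close>, which are distinct because there are no loops or symmetric arcs.\<close>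

lemma not_weakly_reachable2_dominates:
  assumes og: "oriented_graph V A" and nr: "\<not> weakly_reachable2 V A x v"
  shows "(v, x) \<in> A" and "A `` {x} \<subseteq> A `` {v}" and "A\<inverse> `` {v} \<subseteq> A\<inverse> `` {x}"
proof -
  have AV: "A \<subseteq> V \<times> V" and asym: "\<And>u w. (u, w) \<in> A \<Longrightarrow> (w, u) \<notin> A"
    using og unfolding oriented_graph_def by auto
  have xv: "(x, v) \<notin> A"
    using nr unfolding weakly_reachable2_def arc10_def by auto
  show "(v, x) \<in> A"
    using nr unfolding weakly_reachable2_def arc10_def arc00_def by auto
  show out: "A `` {x} \<subseteq> A `` {v}"
  proof
    fix y assume "y \<in> A `` {x}"
    then have xy: "(x, y) \<in> A" and "y \<in> V" using AV by auto
    moreover have "y \<noteq> v" using xy xv by auto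
    ultimately show "y \<in> A `` {v}"
      using nr unfolding weakly_reachable2_def arc10_def arc00_def by blast
  qed
  show "A\<inverse> `` {v} \<subseteq> A\<inverse> `` {x}"
  proof
    fix w assume "w \<in> A\<inverse> `` {v}"
    then have wv: "(w, v) \<in> A" and "w \<in> V" using AV by auto
    then have "\<not> arc00 A x w"
      using nr unfolding weakly_reachable2_def arc10_def by blast
    moreover have "(x, w) \<notin> A" using out wv asym by blast
    ultimately show "w \<in> A\<inverse> `` {x}" unfolding arc00_def by auto
  qed
qed

lemma weak_king_if_min_indegree:
  assumes og: "oriented_graph V A" and SV: "S \<subseteq> V" and xS: "x \<in> S"
    and min: "\<And>y. y \<in> S \<Longrightarrow> indegree S A x \<le> indegree S A y"
    and closed: "\<And>v. (v, x) \<in> A \<Longrightarrow> A `` {x} \<subseteq> A `` {v} \<Longrightarrow> v \<in> S"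
  shows "weak_king V A x"
  unfolding weak_king_def
proof (intro conjI ballI impI)
  show "x \<in> V" using SV xS by auto
  fix v assume "v \<in> V" "v \<noteq> x"
  show "weakly_reachable2 V A x v"
  proof (rule ccontr)
    assume nr: "\<not> weakly_reachable2 V A x v"
    note dom = not_weakly_reachable2_dominates[OF og nr]
    have vS: "v \<in> S" using closed dom(1,2) .
    have "(v, v) \<notin> A" using og unfolding oriented_graph_def by auto
    then have "{w \<in> S. (w, v) \<in> A} \<subset> {w \<in> S. (w, x) \<in> A}"
      using dom(1,3) vS by blast
    moreover have "finite S" using og SV finite_subset unfolding oriented_graph_def by auto
    ultimately have "indegree S A v < indegree S A x"
      unfolding indegree_def by (simp add: psubset_card_mono)
    then show False using min[OF vS] by simp
  qed
qed

lemma exists_weak_king_arc_to: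
  assumes og: "oriented_graph V A" and no_trans: "\<forall>v\<in>V. \<not> transmitter V A v" and uV: "u \<in> V"
  shows "\<exists>x. (x, u) \<in> A \<and> weak_king V A x"
proof -
  define S where "S = {w \<in> V. (w, u) \<in> A}"
  have "finite V" using og unfolding oriented_graph_def by auto
  moreover have "indegree V A u \<noteq> 0" using no_trans uV unfolding transmitter_def by auto
  ultimately obtain w where "w \<in> S" unfolding indegree_def S_def by (auto simp: card_eq_0_iff)
  then obtain x where xS: "x \<in> S" and min: "\<And>y. y \<in> S \<Longrightarrow> indegree S A x \<le> indegree S A y"
    using ex_has_least_nat[of "\<lambda>y. y \<in> S" w "indegree S A"] by blast
  have "weak_king V A x"
  proof (rule weak_king_if_min_indegree[OF og _ xS min])
    show "S \<subseteq> V" by (auto simp: S_def)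
    fix v assume "(v, x) \<in> A" "A `` {x} \<subseteq> A `` {v}"
    then show "v \<in> S"
      using xS og unfolding S_def oriented_graph_def by blast
  qed
  then show ?thesis using xS S_def by auto
qed

theorem theorem6:
  fixes V :: "'a set" and A :: "('a \<times> 'a) set"
  assumes "oriented_graph V A"
    and "\<forall>v\<in>V. \<not> transmitter V A v"
  shows "card {u \<in> V. weak_king V A u} \<ge> 3"
proof -
  have fin: "finite V" and ne: "V \<noteq> {}" and loopfree: "\<And>v. (v, v) \<notin> A"
    and asym: "\<And>u v. (u, v) \<in> A \<Longrightarrow> (v, u) \<notin> A"
    using assms(1) unfolding oriented_graph_def by auto
  obtain x\<^sub>1 where x\<^sub>1: "weak_king V A x\<^sub>1"
    using exists_weak_king_arc_to[OF assms] ne by blast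
  then obtain x\<^sub>2 where x\<^sub>2: "(x\<^sub>2, x\<^sub>1) \<in> A" "weak_king V A x\<^sub>2"
    using exists_weak_king_arc_to[OF assms] unfolding weak_king_def by blast
  then obtain x\<^sub>3 where x\<^sub>3: "(x\<^sub>3, x\<^sub>2) \<in> A" "weak_king V A x\<^sub>3"
    using exists_weak_king_arc_to[OF assms] unfolding weak_king_def by blast
  have "3 = card {x\<^sub>1, x\<^sub>2, x\<^sub>3}"
    using x\<^sub>2(1) x\<^sub>3(1) loopfree asym by (metis card_3_iff)
  also have "\<dots> \<le> card {u \<in> V. weak_king V A u}"
    using x\<^sub>1 x\<^sub>2 x\<^sub>3 fin by (intro card_mono) (auto simp: weak_king_def)
  finally show ?thesis .
qed

end
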